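(* Let $T=(V,E)$ be a finite rooted tree, $\Pr$ a probability distribution over a finite set of queries, $u\in V$ and $v\in A(u)$. Let $R,R'\subseteq V$ satisfy (i) $v\in R$ and $v\in R'$; (ii) $T(u)\cap R=T(u)\cap R'$; (iii) $\mathrm{path}(u,v)\cap R=\mathrm{path}(u,v)\cap R'=\emptyset$. Then $B_u(R)=B_u(R')$.
   Context: $T=(V,E)$ is a finite rooted tree. For $u\in V$, $T(u)$ is the set of nodes of the subtree rooted at $u$ (including $u$), $A(u)$ the set of proper ancestors of $u$, and for $v\in A(u)$, $\mathrm{path}(u,v)$ the set of nodes strictly between $u$ and $v$ on the path from $u$ to $v$. Each non-leaf node is associated with a variable from a finite set $X$; $\mathrm{vars}(u)$ is the set of variables associated with the nodes of $T(u)$. Each query $q$ determines $Z_q\subseteq X$. For $R\subseteq V$, $w\in V$, query $q$: $I_q(w,R)=1$ iff $w\in R$, $\mathrm{vars}(w)\subseteq Z_q$, and no $x\in A(w)$ has $x\in R$ and $\mathrm{vars}(x)\subseteq Z_q$; else $I_q(w,R)=0$. $\mathbb{E}[I(w,R)]=\sum_q\Pr(q)I_q(w,R)$. Each node $x$ has a partial cost $c(x)$, and the total cost is $C(w)=\sum_{x\in T(w)}c(x)$. The partial benefit of $R$ at $u$ is $B_u(R)=\sum_{w\in R\cap T(u)}\mathbb{E}[I(w,R)]\,C(w)$. *)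

theory Defs
  imports Complex_Main
begin

text \<open>A finite rooted tree is given by a finite node set V, a root r \<in> V and a
parent function par: every non-root node x \<in> V has parent par x \<in> V, and every
node of V is reachable from the root along parent-to-child edges.\<close>

definition tree_edges :: "'a set \<Rightarrow> 'a \<Rightarrow> ('a \<Rightarrow> 'a) \<Rightarrow> ('a \<times> 'a) set" where
  "tree_edges V r par = {(par x, x) | x. x \<in> V \<and> x \<noteq> r}"

definition rooted_tree :: "'a set \<Rightarrow> 'a \<Rightarrow> ('a \<Rightarrow> 'a) \<Rightarrow> bool" where
  "rooted_tree V r par \<longleftrightarrow> finite V \<and> r \<in> V \<and>
     (\<forall>x\<in>V. x \<noteq> r \<longrightarrow> par x \<in> V) \<and>
     (\<forall>x\<in>V. (r, x) \<in> (tree_edges V r par)\<^sup>*)"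

definition subtree :: "'a set \<Rightarrow> 'a \<Rightarrow> ('a \<Rightarrow> 'a) \<Rightarrow> 'a \<Rightarrow> 'a set" where
  "subtree V r par u = {w \<in> V. (u, w) \<in> (tree_edges V r par)\<^sup>*}"

definition ancestors :: "'a set \<Rightarrow> 'a \<Rightarrow> ('a \<Rightarrow> 'a) \<Rightarrow> 'a \<Rightarrow> 'a set" where
  "ancestors V r par u = {x. (x, u) \<in> (tree_edges V r par)\<^sup>+}"

definition tree_path :: "'a set \<Rightarrow> 'a \<Rightarrow> ('a \<Rightarrow> 'a) \<Rightarrow> 'a \<Rightarrow> 'a \<Rightarrow> 'a set" where
  "tree_path V r par u v = {x \<in> ancestors V r par u. v \<in> ancestors V r par x}"

definition is_leaf :: "'a set \<Rightarrow> 'a \<Rightarrow> ('a \<Rightarrow> 'a) \<Rightarrow> 'a \<Rightarrow> bool" where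
  "is_leaf V r par w \<longleftrightarrow> (\<nexists>c. (w, c) \<in> tree_edges V r par)"

definition vars :: "'a set \<Rightarrow> 'a \<Rightarrow> ('a \<Rightarrow> 'a) \<Rightarrow> ('a \<Rightarrow> 'x) \<Rightarrow> 'a \<Rightarrow> 'x set" where
  "vars V r par var u = var ` {w \<in> subtree V r par u. \<not> is_leaf V r par w}"

definition Iq :: "'a set \<Rightarrow> 'a \<Rightarrow> ('a \<Rightarrow> 'a) \<Rightarrow> ('a \<Rightarrow> 'x) \<Rightarrow> 'x set \<Rightarrow> 'a \<Rightarrow> 'a set \<Rightarrow> real" where
  "Iq V r par var Zq w R =
     (if w \<in> R \<and> vars V r par var w \<subseteq> Zq \<and>
         \<not> (\<exists>x \<in> ancestors V r par w. x \<in> R \<and> vars V r par var x \<subseteq> Zq)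
      then 1 else 0)"

definition EI :: "'a set \<Rightarrow> 'a \<Rightarrow> ('a \<Rightarrow> 'a) \<Rightarrow> ('a \<Rightarrow> 'x) \<Rightarrow> 'q set \<Rightarrow> ('q \<Rightarrow> real)
    \<Rightarrow> ('q \<Rightarrow> 'x set) \<Rightarrow> 'a \<Rightarrow> 'a set \<Rightarrow> real" where
  "EI V r par var Q Pr Z w R = (\<Sum>q\<in>Q. Pr q * Iq V r par var (Z q) w R)"

definition total_cost :: "'a set \<Rightarrow> 'a \<Rightarrow> ('a \<Rightarrow> 'a) \<Rightarrow> ('a \<Rightarrow> real) \<Rightarrow> 'a \<Rightarrow> real" where
  "total_cost V r par c w = (\<Sum>x\<in>subtree V r par w. c x)"

definition benefit :: "'a set \<Rightarrow> 'a \<Rightarrow> ('a \<Rightarrow> 'a) \<Rightarrow> ('a \<Rightarrow> 'x) \<Rightarrow> 'q set \<Rightarrow> ('q \<Rightarrow> real)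
    \<Rightarrow> ('q \<Rightarrow> 'x set) \<Rightarrow> ('a \<Rightarrow> real) \<Rightarrow> 'a \<Rightarrow> 'a set \<Rightarrow> real" where
  "benefit V r par var Q Pr Z c u R =
     (\<Sum>w \<in> R \<inter> subtree V r par u. EI V r par var Q Pr Z w R * total_cost V r par c w)"

end

theory Submission
  imports Defs
begin

text \<open>Let w \<in> T(u). An ancestor x of w either lies in T(u), where R and R' agree, or on
path(u,v), where both miss, or at or above v. In the last case either vars(v) \<subseteq> Z, and then
v itself is an ancestor of w in both R and R' blocking w, or vars(x) \<supseteq> vars(v) \<nsubseteq> Z and x does
not block w. Hence I_q(w,R) = I_q(w,R') for all w \<in> T(u), and the benefits agree termwise; no property
of Pr, Z or c is needed.\<close>

lemma tree_edges_iff: "(a, b) \<in> tree_edges V r par \<longleftrightarrow> b \<in> V \<and> b \<noteq> r \<and> a = par b"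
  unfolding tree_edges_def by auto

lemma rtrancl_tree_edges_linear:
  assumes "(a, w) \<in> (tree_edges V r par)\<^sup>*" and "(b, w) \<in> (tree_edges V r par)\<^sup>*"
  shows "(a, b) \<in> (tree_edges V r par)\<^sup>* \<or> (b, a) \<in> (tree_edges V r par)\<^sup>*"
  using assms
proof (induction arbitrary: b rule: rtrancl_induct)
  case base
  then show ?case by blast
next
  case (step y z)
  from step.prems show ?case
  proof (cases rule: rtranclE)
    case base
    then show ?thesis using step.hyps by (meson rtrancl.rtrancl_into_rtrancl)
  next
    case (step y')
    then have "y' = y" using \<open>(y, z) \<in> tree_edges V r par\<close> by (simp add: tree_edges_iff)
    then show ?thesis using step.IH step by blast
  qed
qed

lemma ancestors_subset:
  assumes "rooted_tree V r par"
  shows "ancestors V r par w \<subseteq> V"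
proof
  fix x
  assume "x \<in> ancestors V r par w"
  then obtain y where "(x, y) \<in> tree_edges V r par"
    unfolding ancestors_def by (blast dest: tranclD)
  then show "x \<in> V" using assms by (auto simp: tree_edges_iff rooted_tree_def)
qed

lemma vars_antimono:
  assumes "(x, w) \<in> (tree_edges V r par)\<^sup>*"
  shows "vars V r par var w \<subseteq> vars V r par var x"
  using assms unfolding vars_def subtree_def by (auto intro: rtrancl_trans)

lemma ancestor_of_subtree_node_cases:
  assumes tree: "rooted_tree V r par"
    and w: "w \<in> subtree V r par u" and vA: "v \<in> ancestors V r par u"
    and x: "x \<in> ancestors V r par w"
  shows "x \<in> subtree V r par u \<or> x \<in> tree_path V r par u v \<or> (x, v) \<in> (tree_edges V r par)\<^sup>*"
proof -
  let ?E = "tree_edges V r par"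
  have uw: "(u, w) \<in> ?E\<^sup>*" using w by (simp add: subtree_def)
  have xw: "(x, w) \<in> ?E\<^sup>*" using x by (simp add: ancestors_def)
  have vu: "(v, u) \<in> ?E\<^sup>*" using vA by (simp add: ancestors_def)
  consider "(u, x) \<in> ?E\<^sup>*" | "(x, u) \<in> ?E\<^sup>+"
    using rtrancl_tree_edges_linear[OF uw xw] by (metis rtranclD)
  then show ?thesis
  proof cases
    case 1
    then show ?thesis using ancestors_subset[OF tree] x by (auto simp: subtree_def)
  next
    case xu: 2
    consider "(x, v) \<in> ?E\<^sup>*" | "(v, x) \<in> ?E\<^sup>+"
      using rtrancl_tree_edges_linear[OF vu trancl_into_rtrancl[OF xu]] by (metis rtranclD)
    then show ?thesis
      by cases (use xu in \<open>auto simp: tree_path_def ancestors_def\<close>)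
  qed
qed

lemma Iq_eq_in_subtree:
  assumes tree: "rooted_tree V r par"
    and vA: "v \<in> ancestors V r par u"
    and i: "v \<in> R" "v \<in> R'"
    and ii: "subtree V r par u \<inter> R = subtree V r par u \<inter> R'"
    and iii: "tree_path V r par u v \<inter> R = {}" "tree_path V r par u v \<inter> R' = {}"
    and w: "w \<in> subtree V r par u"
  shows "Iq V r par var Zq w R = Iq V r par var Zq w R'"
proof -
  let ?blocks = "\<lambda>S x. x \<in> S \<and> vars V r par var x \<subseteq> Zq"
  have "v \<in> ancestors V r par w"
    using vA w by (auto simp: ancestors_def subtree_def intro: trancl_rtrancl_trancl)
  have "(\<exists>x \<in> ancestors V r par w. ?blocks R x) \<longleftrightarrow> (\<exists>x \<in> ancestors V r par w. ?blocks R' x)"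
  proof (cases "vars V r par var v \<subseteq> Zq")
    case True
    then show ?thesis using \<open>v \<in> ancestors V r par w\<close> i by blast
  next
    case False
    have "?blocks R x \<longleftrightarrow> ?blocks R' x" if "x \<in> ancestors V r par w" for x
      using ancestor_of_subtree_node_cases[OF tree w vA that] ii iii
        vars_antimono[of x v V r par var] False
      by blast
    then show ?thesis by blast
  qed
  moreover have "w \<in> R \<longleftrightarrow> w \<in> R'" using ii w by blast
  ultimately show ?thesis unfolding Iq_def by simp
qed

theorem lemma2:
  fixes V :: "'a set" and r :: 'a and par :: "'a \<Rightarrow> 'a"
    and X :: "'x set" and var :: "'a \<Rightarrow> 'x"
    and Q :: "'q set" and Pr :: "'q \<Rightarrow> real" and Z :: "'q \<Rightarrow> 'x set"
    and c :: "'a \<Rightarrow> real" and u v :: 'a and R R' :: "'a set"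
  assumes tree: "rooted_tree V r par"
    and finX: "finite X" and varX: "\<forall>w\<in>V. \<not> is_leaf V r par w \<longrightarrow> var w \<in> X"
    and finQ: "finite Q" and Pr_nonneg: "\<forall>q\<in>Q. Pr q \<ge> 0" and Pr_sum: "(\<Sum>q\<in>Q. Pr q) = 1"
    and ZX: "\<forall>q\<in>Q. Z q \<subseteq> X"
    and uV: "u \<in> V" and vA: "v \<in> ancestors V r par u"
    and RV: "R \<subseteq> V" and R'V: "R' \<subseteq> V"
    and i: "v \<in> R" "v \<in> R'"
    and ii: "subtree V r par u \<inter> R = subtree V r par u \<inter> R'"
    and iii: "tree_path V r par u v \<inter> R = {}" "tree_path V r par u v \<inter> R' = {}"
  shows "benefit V r par var Q Pr Z c u R = benefit V r par var Q Pr Z c u R'"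
proof -
  have same_nodes: "R \<inter> subtree V r par u = R' \<inter> subtree V r par u" using ii by blast
  have "EI V r par var Q Pr Z w R = EI V r par var Q Pr Z w R'"
    if "w \<in> subtree V r par u" for w
    unfolding EI_def by (simp add: Iq_eq_in_subtree[OF tree vA i ii iii that])
  then show ?thesis unfolding benefit_def same_nodes by (intro sum.cong) auto
qed

end
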